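(* Let $(M,g,J,\kappa)$ be an almost Kähler manifold of real dimension $2n$, let $o\in M$ and let $\{Z_1,\dots,Z_n\}$ be a generalized normal holomorphic frame around $o$. Then for all $1\le i,j,r,s\le n$, $$R^J(Z_{\bar i},Z_j,Z_r,Z_{\bar s})(o)=-i\,g\big(\nabla_{Z_{\bar i}}\big(J\nabla_{Z_j}Z_r\big),Z_{\bar s}\big)(o).$$
   Context: An almost Kähler manifold $(M,g,J,\kappa)$: $\kappa$ a symplectic form, $J$ an almost complex structure with $g(\cdot,\cdot)=\kappa(\cdot,J\cdot)$ a $J$-Hermitian Riemannian metric. $\nabla$ is the Levi-Civita connection of $g$; $g$, $J$, $\nabla$ are extended complex-(bi)linearly. Write $Z_{\bar i}=\overline{Z_i}$, $\nabla_k=\nabla_{Z_k}$, $\nabla_{\bar k}=\nabla_{Z_{\bar k}}$. For vector fields $X,Y,Z,W$ define $$R^J(X,Y,Z,W)=g\big(\nabla_X(J\nabla_YZ)-\nabla_Y(J\nabla_XZ)-\nabla_{[X,Y]}(JZ),\,JW\big).$$ A generalized normal holomorphic frame around $o$ is a local frame $\{Z_1,\dots,Z_n\}$ of $T^{1,0}_JM$ (the $+i$-eigenbundle of $J$) near $o$ such that: (1) $\nabla_kZ_{\bar i}(o)=0$ for all $i,k$; (2) $\nabla_kZ_i(o)$ is of type $(0,1)$ for all $i,k$; (3) $G_{r\bar s}:=g(Z_r,Z_{\bar s})$ satisfies $G_{r\bar s}(o)=\delta_{rs}$ and $dG_{r\bar s}(o)=0$; (4) $\nabla_r\nabla_{\bar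 k}Z_i(o)=0$ for all $r,k,i$. Such frames exist around every point of an almost Kähler manifold. *)

theory Defs
  imports "HOL-Analysis.Analysis"
begin

text \<open>Local (coordinate-chart) model of an almost Kaehler manifold.
  Points are in an open set U of real^'d (a chart of M, CARD('d) = 2n);
  tensors are given by their component fields in these coordinates.
  Complex tangent vectors are elements of complex^'d (complexification).\<close>

definition partial :: "'d::finite \<Rightarrow> (real^'d \<Rightarrow> 'b::real_normed_vector) \<Rightarrow> real^'d \<Rightarrow> 'b" where
  "partial a f x = vector_derivative (\<lambda>t. f (x + t *\<^sub>R axis a 1)) (at 0)"

fun pd :: "'d::finite list \<Rightarrow> (real^'d \<Rightarrow> 'b::real_normed_vector) \<Rightarrow> real^'d \<Rightarrow> 'b" where
  "pd [] f = f"
| "pd (a # as) f = partial a (pd as f)"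

definition smooth_on :: "(real^'d::finite) set \<Rightarrow> (real^'d \<Rightarrow> 'b::real_normed_vector) \<Rightarrow> bool" where
  "smooth_on U f \<longleftrightarrow> (\<forall>as. continuous_on U (pd as f) \<and>
      (\<forall>x\<in>U. \<forall>a. (\<lambda>t. pd as f (x + t *\<^sub>R axis a 1)) differentiable (at 0)))"

definition smooth_matrix_on :: "(real^'d::finite) set \<Rightarrow> (real^'d \<Rightarrow> real^'d^'d) \<Rightarrow> bool" where
  "smooth_matrix_on U A \<longleftrightarrow> (\<forall>a b. smooth_on U (\<lambda>x. A x $ a $ b))"

definition smooth_field_on :: "(real^'d::finite) set \<Rightarrow> (real^'d \<Rightarrow> complex^'d) \<Rightarrow> bool" where
  "smooth_field_on U X \<longleftrightarrow> (\<forall>c. smooth_on U (\<lambda>x. X x $ c))"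

text \<open>Conventions: (J v)_c = sum_b J_cb v_b; g(v,w) = sum v_a g_ab w_b;
  kappa(v,w) = sum v_a kappa_ab w_b; g(X,Y) = kappa(X, JY) i.e. g = kappa ** J.\<close>
definition almost_kahler ::
  "(real^'d::finite) set \<Rightarrow> (real^'d \<Rightarrow> real^'d^'d) \<Rightarrow> (real^'d \<Rightarrow> real^'d^'d) \<Rightarrow> (real^'d \<Rightarrow> real^'d^'d) \<Rightarrow> bool" where
  "almost_kahler U g J \<kappa> \<longleftrightarrow> open U \<and>
     smooth_matrix_on U g \<and> smooth_matrix_on U J \<and> smooth_matrix_on U \<kappa> \<and>
     (\<forall>x\<in>U.
        transpose (g x) = g x \<and>
        (\<forall>v. v \<noteq> 0 \<longrightarrow> v \<bullet> (g x *v v) > 0) \<and>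
        J x ** J x = - mat 1 \<and>
        transpose (J x) ** g x ** J x = g x \<and>
        transpose (\<kappa> x) = - \<kappa> x \<and>
        invertible (\<kappa> x) \<and>
        (\<forall>a b c. partial a (\<lambda>y. \<kappa> y $ b $ c) x + partial b (\<lambda>y. \<kappa> y $ c $ a) x
                 + partial c (\<lambda>y. \<kappa> y $ a $ b) x = 0) \<and>
        g x = \<kappa> x ** J x)"

definition gC :: "(real^'d::finite \<Rightarrow> real^'d^'d) \<Rightarrow> real^'d \<Rightarrow> complex^'d \<Rightarrow> complex^'d \<Rightarrow> complex" where
  "gC g x v w = (\<Sum>a\<in>UNIV. \<Sum>b\<in>UNIV. v $ a * complex_of_real (g x $ a $ b) * w $ b)"

definition jmul :: "(real^'d::finite \<Rightarrow> real^'d^'d) \<Rightarrow> real^'d \<Rightarrow> complex^'d \<Rightarrow> complex^'d" where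
  "jmul J x v = (\<chi> c. \<Sum>b\<in>UNIV. complex_of_real (J x $ c $ b) * v $ b)"

definition cvec :: "complex^'d::finite \<Rightarrow> complex^'d" where
  "cvec v = (\<chi> a. cnj (v $ a))"

definition cfield :: "(real^'d::finite \<Rightarrow> complex^'d) \<Rightarrow> real^'d \<Rightarrow> complex^'d" where
  "cfield X = (\<lambda>x. cvec (X x))"

definition christoffel :: "(real^'d::finite \<Rightarrow> real^'d^'d) \<Rightarrow> 'd \<Rightarrow> 'd \<Rightarrow> 'd \<Rightarrow> real^'d \<Rightarrow> real" where
  "christoffel g c a b x = (1/2) * (\<Sum>e\<in>UNIV. matrix_inv (g x) $ c $ e *
      (partial a (\<lambda>y. g y $ e $ b) x + partial b (\<lambda>y. g y $ e $ a) x - partial e (\<lambda>y. g y $ a $ b) x))"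

definition nabla :: "(real^'d::finite \<Rightarrow> real^'d^'d) \<Rightarrow> (real^'d \<Rightarrow> complex^'d) \<Rightarrow> (real^'d \<Rightarrow> complex^'d) \<Rightarrow> real^'d \<Rightarrow> complex^'d" where
  "nabla g X Y x = (\<chi> c. \<Sum>a\<in>UNIV. X x $ a *
      (partial a (\<lambda>y. Y y $ c) x + (\<Sum>b\<in>UNIV. complex_of_real (christoffel g c a b x) * Y x $ b)))"

definition lie :: "(real^'d::finite \<Rightarrow> complex^'d) \<Rightarrow> (real^'d \<Rightarrow> complex^'d) \<Rightarrow> real^'d \<Rightarrow> complex^'d" where
  "lie X Y x = (\<chi> c. \<Sum>a\<in>UNIV. X x $ a * partial a (\<lambda>y. Y y $ c) x - Y x $ a * partial a (\<lambda>y. X y $ c) x)"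

definition RJ :: "(real^'d::finite \<Rightarrow> real^'d^'d) \<Rightarrow> (real^'d \<Rightarrow> real^'d^'d) \<Rightarrow>
    (real^'d \<Rightarrow> complex^'d) \<Rightarrow> (real^'d \<Rightarrow> complex^'d) \<Rightarrow> (real^'d \<Rightarrow> complex^'d) \<Rightarrow> (real^'d \<Rightarrow> complex^'d) \<Rightarrow> real^'d \<Rightarrow> complex" where
  "RJ g J X Y Z W x = gC g x
     (nabla g X (\<lambda>y. jmul J y (nabla g Y Z y)) x - nabla g Y (\<lambda>y. jmul J y (nabla g X Z y)) x
      - nabla g (lie X Y) (\<lambda>y. jmul J y (Z y)) x)
     (jmul J x (W x))"

definition gen_normal_hol_frame ::
  "(real^'d::finite) set \<Rightarrow> (real^'d \<Rightarrow> real^'d^'d) \<Rightarrow> (real^'d \<Rightarrow> real^'d^'d) \<Rightarrow> real^'d \<Rightarrow> ('n::finite \<Rightarrow> real^'d \<Rightarrow> complex^'d) \<Rightarrow> bool" where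
  "gen_normal_hol_frame U g J p0 Z \<longleftrightarrow>
     (\<exists>V. open V \<and> p0 \<in> V \<and> V \<subseteq> U \<and>
        (\<forall>k. smooth_field_on V (Z k)) \<and>
        (\<forall>x\<in>V. (\<forall>k. jmul J x (Z k x) = (\<chi> c. \<i> * Z k x $ c)) \<and>
           (\<forall>v. jmul J x v = (\<chi> c. \<i> * v $ c) \<longrightarrow> (\<exists>coef. v = (\<Sum>k\<in>UNIV. (\<chi> c. coef k * Z k x $ c)))) \<and>
           (\<forall>coef. (\<Sum>k\<in>UNIV. (\<chi> c. coef k * Z k x $ c)) = 0 \<longrightarrow> (\<forall>k. coef k = 0)))) \<and>
     (\<forall>i k. nabla g (Z k) (cfield (Z i)) p0 = 0) \<and>
     (\<forall>i k. jmul J p0 (nabla g (Z k) (Z i) p0) = (\<chi> c. - \<i> * nabla g (Z k) (Z i) p0 $ c)) \<and>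
     (\<forall>r s. gC g p0 (Z r p0) (cvec (Z s p0)) = (if r = s then 1 else 0)) \<and>
     (\<forall>r s a. partial a (\<lambda>y. gC g y (Z r y) (cvec (Z s y))) p0 = 0) \<and>
     (\<forall>r k i. nabla g (Z r) (nabla g (cfield (Z k)) (Z i)) p0 = 0)"

end

theory Submission
  imports Defs
begin

text \<open>Of the three terms of R^J(conj Z_i, Z_j, Z_r, conj Z_s) only the first survives at the base
  point o. The field W = \<nabla>_{conj Z_i} Z_r is the conjugate of \<nabla>_{Z_i} conj Z_r, which vanishes at o
  by condition (1); where W vanishes, \<nabla>_{Z_j}(J W) = J \<nabla>_{Z_j} W, and this vanishes at o by
  condition (4). The Levi-Civita connection is torsion free, so
  [conj Z_i, Z_j] = \<nabla>_{conj Z_i} Z_j - \<nabla>_{Z_j} conj Z_i also vanishes at o by (1), and \<nabla> is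
  tensorial in its direction. Finally J conj Z_s = -i conj Z_s.\<close>

text \<open>\<^const>\<open>partial\<close> is a \<^const>\<open>vector_derivative\<close>, so it obeys the calculus rules only where
  the restrictions to the coordinate lines are differentiable.\<close>
definition partially_differentiable :: "(real^'d::finite \<Rightarrow> 'b::real_normed_vector) \<Rightarrow> real^'d \<Rightarrow> bool" where
  "partially_differentiable f x \<longleftrightarrow> (\<forall>a. (\<lambda>t. f (x + t *\<^sub>R axis a 1)) differentiable (at 0))"

lemma has_vector_derivative_partial:
  "partially_differentiable f x \<Longrightarrow>
     ((\<lambda>t. f (x + t *\<^sub>R axis a 1)) has_vector_derivative partial a f x) (at 0)"
  unfolding partially_differentiable_def partial_def using vector_derivative_works by blast

lemma partial_eqI:
  "((\<lambda>t. f (x + t *\<^sub>R axis a 1)) has_vector_derivative D) (at 0) \<Longrightarrow> partial a f x = D"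
  unfolding partial_def by (rule vector_derivative_at)

lemma partially_differentiableI:
  "(\<And>a. ((\<lambda>t. f (x + t *\<^sub>R axis a 1)) has_vector_derivative D a) (at 0)) \<Longrightarrow>
     partially_differentiable f x"
  unfolding partially_differentiable_def using differentiableI_vector by blast

lemma partially_differentiable_const: "partially_differentiable (\<lambda>y. c) x"
  by (rule partially_differentiableI) (rule has_vector_derivative_const)

lemma partially_differentiable_add:
  "partially_differentiable f x \<Longrightarrow> partially_differentiable h x \<Longrightarrow>
     partially_differentiable (\<lambda>y. f y + h y) x"
  by (rule partially_differentiableI, rule has_vector_derivative_add, (erule has_vector_derivative_partial)+)

lemma partially_differentiable_diff:
  "partially_differentiable f x \<Longrightarrow> partially_differentiable h x \<Longrightarrow>
     partially_differentiable (\<lambda>y. f y - h y) x"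
  by (rule partially_differentiableI, rule has_vector_derivative_diff, (erule has_vector_derivative_partial)+)

lemma partially_differentiable_mult:
  fixes f h :: "real^'d::finite \<Rightarrow> 'b::real_normed_algebra"
  shows "partially_differentiable f x \<Longrightarrow> partially_differentiable h x \<Longrightarrow>
     partially_differentiable (\<lambda>y. f y * h y) x"
  by (rule partially_differentiableI, rule has_vector_derivative_mult, (erule has_vector_derivative_partial)+)

lemma partial_mult:
  fixes f h :: "real^'d::finite \<Rightarrow> 'b::real_normed_algebra"
  shows "partially_differentiable f x \<Longrightarrow> partially_differentiable h x \<Longrightarrow>
     partial a (\<lambda>y. f y * h y) x = f x * partial a h x + partial a f x * h x"
  by (rule partial_eqI, rule has_vector_derivative_mult[THEN has_vector_derivative_eq_rhs],
      (erule has_vector_derivative_partial)+, simp)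

lemma partially_differentiable_sum:
  "finite S \<Longrightarrow> (\<And>i. i \<in> S \<Longrightarrow> partially_differentiable (f i) x) \<Longrightarrow>
     partially_differentiable (\<lambda>y. \<Sum>i\<in>S. f i y) x"
  by (rule partially_differentiableI, rule has_vector_derivative_sum, rule has_vector_derivative_partial, blast)

lemma partial_sum:
  "finite S \<Longrightarrow> (\<And>i. i \<in> S \<Longrightarrow> partially_differentiable (f i) x) \<Longrightarrow>
     partial a (\<lambda>y. \<Sum>i\<in>S. f i y) x = (\<Sum>i\<in>S. partial a (f i) x)"
  by (rule partial_eqI, rule has_vector_derivative_sum, rule has_vector_derivative_partial, blast)

lemma partially_differentiable_prod:
  fixes f :: "'i \<Rightarrow> real^'d::finite \<Rightarrow> 'b::{real_normed_algebra,comm_ring_1}"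
  assumes "finite S" "\<And>i. i \<in> S \<Longrightarrow> partially_differentiable (f i) x"
  shows "partially_differentiable (\<lambda>y. \<Prod>i\<in>S. f i y) x"
  using assms
  by (induction S rule: finite_induct) (simp_all add: partially_differentiable_const partially_differentiable_mult)

lemma partially_differentiable_cnj:
  "partially_differentiable f x \<Longrightarrow> partially_differentiable (\<lambda>y. cnj (f y)) x"
  by (rule partially_differentiableI, rule has_vector_derivative_cnj, erule has_vector_derivative_partial)

lemma partial_cnj:
  "partially_differentiable f x \<Longrightarrow> partial a (\<lambda>y. cnj (f y)) x = cnj (partial a f x)"
  by (rule partial_eqI, rule has_vector_derivative_cnj, erule has_vector_derivative_partial)

lemma partially_differentiable_of_real:
  fixes f :: "real^'d::finite \<Rightarrow> real"
  shows "partially_differentiable f x \<Longrightarrow> partially_differentiable (\<lambda>y. complex_of_real (f y)) x"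
  by (rule partially_differentiableI, rule has_vector_derivative_of_real,
      unfold has_real_derivative_iff_has_vector_derivative, erule has_vector_derivative_partial)

lemma partial_of_real:
  fixes f :: "real^'d::finite \<Rightarrow> real"
  shows "partially_differentiable f x \<Longrightarrow>
     partial a (\<lambda>y. complex_of_real (f y)) x = complex_of_real (partial a f x)"
  by (rule partial_eqI, rule has_vector_derivative_of_real,
      unfold has_real_derivative_iff_has_vector_derivative, erule has_vector_derivative_partial)

lemma partially_differentiable_divide:
  fixes f h :: "real^'d::finite \<Rightarrow> real"
  shows "partially_differentiable f x \<Longrightarrow> partially_differentiable h x \<Longrightarrow> h x \<noteq> 0 \<Longrightarrow>
     partially_differentiable (\<lambda>y. f y / h y) x"
  unfolding partially_differentiable_def by (auto intro!: differentiable_divide)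

lemma partially_differentiable_det:
  fixes F :: "real^'d::finite \<Rightarrow> real^'n::finite^'n"
  assumes "\<And>i j. partially_differentiable (\<lambda>y. F y $ i $ j) x"
  shows "partially_differentiable (\<lambda>y. det (F y)) x"
  unfolding det_def
  by (intro partially_differentiable_sum partially_differentiable_mult partially_differentiable_const
      partially_differentiable_prod assms finite_permutations finite_UNIV finite)

lemma eventually_nhds_along_axis:
  fixes x :: "real^'d::finite"
  assumes "eventually P (nhds x)"
  shows "eventually (\<lambda>t::real. P (x + t *\<^sub>R axis a 1)) (nhds 0)"
proof -
  have "isCont (\<lambda>t::real. x + t *\<^sub>R axis a 1) 0"
    by (intro continuous_intros)
  then have "((\<lambda>t::real. x + t *\<^sub>R axis a 1) \<longlongrightarrow> x + 0 *\<^sub>R axis a 1) (nhds 0)"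
    using tendsto_at_iff_tendsto_nhds isCont_def by (metis (no_types, lifting))
  then show ?thesis
    using assms eventually_compose_filterlim[of P "nhds x"] by simp
qed

lemma partial_cong_eventually:
  fixes x :: "real^'d::finite"
  assumes "eventually (\<lambda>y. f y = h y) (nhds x)"
  shows "partial a f x = partial a h x"
proof -
  have "eventually (\<lambda>t. t \<in> UNIV \<longrightarrow> f (x + t *\<^sub>R axis a 1) = h (x + t *\<^sub>R axis a 1)) (nhds 0)"
    using eventually_nhds_along_axis[OF assms, of a] by simp
  then show ?thesis
    unfolding partial_def by (rule vector_derivative_cong_eq) auto
qed

lemma partially_differentiable_cong_eventually:
  fixes x :: "real^'d::finite"
  assumes "eventually (\<lambda>y. f y = h y) (nhds x)" "partially_differentiable h x"
  shows "partially_differentiable f x"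
proof (rule partially_differentiableI)
  fix a
  have "eventually (\<lambda>t. t \<in> UNIV \<longrightarrow> f (x + t *\<^sub>R axis a 1) = h (x + t *\<^sub>R axis a 1)) (nhds 0)"
    using eventually_nhds_along_axis[OF assms(1), of a] by simp
  moreover have "f x = h x"
    using assms(1) eventually_nhds_x_imp_x by blast
  ultimately show "((\<lambda>t. f (x + t *\<^sub>R axis a 1)) has_vector_derivative partial a h x) (at 0)"
    using has_vector_derivative_partial[OF assms(2), of a] by (simp add: has_vector_derivative_cong_ev)
qed

lemma smooth_on_partially_differentiable:
  "smooth_on S f \<Longrightarrow> x \<in> S \<Longrightarrow> partially_differentiable (pd as f) x"
  unfolding smooth_on_def partially_differentiable_def by blast

lemma matrix_inv_cramer:
  fixes A :: "real^'n::finite^'n"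
  assumes "det A \<noteq> 0"
  shows "matrix_inv A $ k $ j = det (\<chi> i l. if l = k then axis j 1 $ i else A $ i $ l) / det A"
proof -
  have "invertible A"
    using assms invertible_det_nz by blast
  then have "A ** matrix_inv A = mat 1 \<and> matrix_inv A ** A = mat 1"
    unfolding invertible_def matrix_inv_def by (rule someI_ex)
  then have "A *v (matrix_inv A *v axis j 1) = axis j 1"
    by (simp add: matrix_vector_mul_assoc)
  then have "matrix_inv A *v axis j 1 = (\<chi> k. det (\<chi> i l. if l = k then axis j 1 $ i else A $ i $ l) / det A)"
    using cramer[OF assms] by blast
  then have "(matrix_inv A *v axis j 1) $ k = det (\<chi> i l. if l = k then axis j 1 $ i else A $ i $ l) / det A"
    by simp
  then show ?thesis
    by (simp add: matrix_vector_mult_basis column_def)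
qed

lemma pos_def_imp_det_nonzero:
  fixes A :: "real^'n::finite^'n"
  assumes "\<forall>v. v \<noteq> 0 \<longrightarrow> v \<bullet> (A *v v) > 0"
  shows "det A \<noteq> 0"
proof -
  have "inj ((*v) A)"
  proof (rule injI)
    fix v w assume "A *v v = A *v w"
    then have "A *v (v - w) = 0"
      by (simp add: matrix_vector_mult_diff_distrib)
    then show "v = w"
      using assms[rule_format, of "v - w"] by auto
  qed
  then show ?thesis
    using det_nz_iff_inj[of "(*v) A"] by simp
qed

lemma partially_differentiable_matrix_inv:
  fixes G :: "real^'d::finite \<Rightarrow> real^'n::finite^'n"
  assumes "open U" "x \<in> U" "\<And>y. y \<in> U \<Longrightarrow> det (G y) \<noteq> 0"
    and "\<And>i j. partially_differentiable (\<lambda>y. G y $ i $ j) x"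
  shows "partially_differentiable (\<lambda>y. matrix_inv (G y) $ k $ j) x"
proof (rule partially_differentiable_cong_eventually)
  show "eventually (\<lambda>y. matrix_inv (G y) $ k $ j =
      det (\<chi> i l. if l = k then axis j 1 $ i else G y $ i $ l) / det (G y)) (nhds x)"
    using eventually_nhds_in_open[OF assms(1,2)]
    by (rule eventually_mono) (simp add: matrix_inv_cramer assms(3))
  show "partially_differentiable
      (\<lambda>y. det (\<chi> i l. if l = k then axis j 1 $ i else G y $ i $ l) / det (G y)) x"
  proof (intro partially_differentiable_divide partially_differentiable_det)
    fix i l
    show "partially_differentiable (\<lambda>y. (\<chi> i l. if l = k then axis j 1 $ i else G y $ i $ l) $ i $ l) x"
      by (cases "l = k") (simp_all add: assms partially_differentiable_const)
  qed (auto simp: assms)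
qed

lemma christoffel_sym:
  assumes "open U" "x \<in> U" "\<And>y. y \<in> U \<Longrightarrow> transpose (g y) = g y"
  shows "christoffel g c a b x = christoffel g c b a x"
proof -
  have "eventually (\<lambda>y. g y $ a $ b = g y $ b $ a) (nhds x)"
    using eventually_nhds_in_open[OF assms(1,2)]
  proof (rule eventually_mono)
    fix y assume "y \<in> U"
    then have "transpose (g y) $ b $ a = g y $ b $ a"
      using assms(3) by simp
    then show "g y $ a $ b = g y $ b $ a"
      by (simp add: transpose_def)
  qed
  then have "partial e (\<lambda>y. g y $ a $ b) x = partial e (\<lambda>y. g y $ b $ a) x" for e
    by (rule partial_cong_eventually)
  then show ?thesis
    unfolding christoffel_def by (simp add: algebra_simps)
qed

lemma almost_kahler_christoffel:
  assumes "almost_kahler U g J \<kappa>" "x \<in> U"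
  shows "partially_differentiable (christoffel g c a b) x"
    and "christoffel g c a b x = christoffel g c b a x"
proof -
  have U: "open U" and g_smooth: "\<And>a b. smooth_on U (\<lambda>y. g y $ a $ b)"
    and g_sym: "\<And>y. y \<in> U \<Longrightarrow> transpose (g y) = g y"
    and g_pos: "\<And>y. y \<in> U \<Longrightarrow> \<forall>v. v \<noteq> 0 \<longrightarrow> v \<bullet> (g y *v v) > 0"
    using assms(1) unfolding almost_kahler_def smooth_matrix_on_def by auto
  have g_det: "\<And>y. y \<in> U \<Longrightarrow> det (g y) \<noteq> 0"
    using g_pos pos_def_imp_det_nonzero by blast
  have "partially_differentiable (pd as (\<lambda>y. g y $ a $ b)) x" for as a b
    using smooth_on_partially_differentiable[OF g_smooth assms(2)] .
  from this[of "[]"] this[of "[e]" for e]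
  show "partially_differentiable (christoffel g c a b) x"
    unfolding christoffel_def
    by (intro partially_differentiable_mult partially_differentiable_const partially_differentiable_sum
        partially_differentiable_add partially_differentiable_diff
        partially_differentiable_matrix_inv[OF U assms(2) g_det]) auto
  show "christoffel g c a b x = christoffel g c b a x"
    by (rule christoffel_sym[OF U assms(2) g_sym])
qed

lemma partially_differentiable_nabla:
  assumes "\<And>a. partially_differentiable (\<lambda>y. X y $ a) x"
    and "\<And>c. partially_differentiable (\<lambda>y. Y y $ c) x"
    and "\<And>a c. partially_differentiable (partial a (\<lambda>y. Y y $ c)) x"
    and "\<And>c a b. partially_differentiable (christoffel g c a b) x"
  shows "partially_differentiable (\<lambda>y. nabla g X Y y $ c) x"
  unfolding nabla_def
  by (simp, intro partially_differentiable_sum partially_differentiable_mult partially_differentiable_add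
      partially_differentiable_of_real assms) auto

lemma nabla_cfield:
  assumes "\<And>c. partially_differentiable (\<lambda>y. Y y $ c) x"
  shows "nabla g (cfield X) Y x = cvec (nabla g X (cfield Y) x)"
  unfolding nabla_def cfield_def cvec_def
  by (simp add: partial_cnj assms vec_eq_iff cnj_sum)

lemma nabla_eq_0_if_direction_0: "X x = 0 \<Longrightarrow> nabla g X Y x = 0"
  unfolding nabla_def by (simp add: vec_eq_iff)

lemma lie_eq_nabla_diff:
  assumes "\<And>c a b. christoffel g c a b x = christoffel g c b a x"
  shows "lie X Y x = nabla g X Y x - nabla g Y X x"
proof -
  have "(\<Sum>a\<in>UNIV. X x $ a * (\<Sum>b\<in>UNIV. complex_of_real (christoffel g c a b x) * Y x $ b))
      = (\<Sum>b\<in>UNIV. Y x $ b * (\<Sum>a\<in>UNIV. complex_of_real (christoffel g c b a x) * X x $ a))" for c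
  proof -
    have "(\<Sum>a\<in>UNIV. X x $ a * (\<Sum>b\<in>UNIV. complex_of_real (christoffel g c a b x) * Y x $ b))
        = (\<Sum>a\<in>UNIV. \<Sum>b\<in>UNIV. X x $ a * complex_of_real (christoffel g c a b x) * Y x $ b)"
      by (simp add: sum_distrib_left mult.assoc)
    also have "\<dots> = (\<Sum>b\<in>UNIV. \<Sum>a\<in>UNIV. X x $ a * complex_of_real (christoffel g c a b x) * Y x $ b)"
      by (rule sum.swap)
    also have "\<dots> = (\<Sum>b\<in>UNIV. Y x $ b * (\<Sum>a\<in>UNIV. complex_of_real (christoffel g c b a x) * X x $ a))"
      by (simp add: sum_distrib_left assms algebra_simps)
    finally show ?thesis .
  qed
  then show ?thesis
    unfolding lie_def nabla_def
    by (simp add: vec_eq_iff distrib_left sum.distrib sum_subtractf algebra_simps)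
qed

text \<open>The Leibniz rule for \<open>\<nabla>(J W)\<close> leaves the term \<open>(\<nabla>J) W\<close>, which drops out where \<open>W\<close> vanishes.\<close>
lemma nabla_jmul_at_zero:
  assumes "W x = 0" "\<And>b. partially_differentiable (\<lambda>y. W y $ b) x"
    and "\<And>c b. partially_differentiable (\<lambda>y. J y $ c $ b) x"
  shows "nabla g X (\<lambda>y. jmul J y (W y)) x = jmul J x (nabla g X W x)"
proof -
  have "partial a (\<lambda>y. \<Sum>b\<in>UNIV. complex_of_real (J y $ c $ b) * W y $ b) x
      = (\<Sum>b\<in>UNIV. complex_of_real (J x $ c $ b) * partial a (\<lambda>y. W y $ b) x)" for a c
    using assms
    by (simp add: partial_sum partial_mult partial_of_real partially_differentiable_mult
        partially_differentiable_of_real vec_eq_iff)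
  moreover have "(\<Sum>a\<in>UNIV. X x $ a * (\<Sum>b\<in>UNIV. complex_of_real (J x $ c $ b) * partial a (\<lambda>y. W y $ b) x))
      = (\<Sum>b\<in>UNIV. complex_of_real (J x $ c $ b) * (\<Sum>a\<in>UNIV. X x $ a * partial a (\<lambda>y. W y $ b) x))" for c
  proof -
    have "(\<Sum>a\<in>UNIV. X x $ a * (\<Sum>b\<in>UNIV. complex_of_real (J x $ c $ b) * partial a (\<lambda>y. W y $ b) x))
        = (\<Sum>a\<in>UNIV. \<Sum>b\<in>UNIV. X x $ a * complex_of_real (J x $ c $ b) * partial a (\<lambda>y. W y $ b) x)"
      by (simp add: sum_distrib_left mult.assoc)
    also have "\<dots> = (\<Sum>b\<in>UNIV. \<Sum>a\<in>UNIV. X x $ a * complex_of_real (J x $ c $ b) * partial a (\<lambda>y. W y $ b) x)"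
      by (rule sum.swap)
    also have "\<dots> = (\<Sum>b\<in>UNIV. complex_of_real (J x $ c $ b) * (\<Sum>a\<in>UNIV. X x $ a * partial a (\<lambda>y. W y $ b) x))"
      by (simp add: sum_distrib_left algebra_simps)
    finally show ?thesis .
  qed
  ultimately show ?thesis
    unfolding nabla_def jmul_def using assms(1) by (simp add: vec_eq_iff)
qed

lemma jmul_cvec: "jmul J x (cvec v) = cvec (jmul J x v)"
  unfolding jmul_def cvec_def by (simp add: vec_eq_iff cnj_sum)

lemma gC_scale_right: "gC g x v (\<chi> c. z * w $ c) = z * gC g x v w"
  unfolding gC_def by (simp add: sum_distrib_left algebra_simps)

lemma gen_normal_hol_frame_partially_differentiable:
  assumes "gen_normal_hol_frame U g J p0 Z"
  shows "partially_differentiable (\<lambda>y. Z k y $ c) p0"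
    and "partially_differentiable (partial a (\<lambda>y. Z k y $ c)) p0"
proof -
  obtain V where "p0 \<in> V" "smooth_field_on V (Z k)"
    using assms unfolding gen_normal_hol_frame_def by blast
  then have "partially_differentiable (pd as (\<lambda>y. Z k y $ c)) p0" for as
    unfolding smooth_field_on_def by (blast intro: smooth_on_partially_differentiable)
  from this[of "[]"] this[of "[a]"]
  show "partially_differentiable (\<lambda>y. Z k y $ c) p0"
    and "partially_differentiable (partial a (\<lambda>y. Z k y $ c)) p0" by simp_all
qed

theorem mainTheorem4:
  fixes U :: "(real^'d::finite) set"
    and g J \<kappa> :: "real^'d \<Rightarrow> real^'d^'d"
    and p0 :: "real^'d"
    and Z :: "'n::finite \<Rightarrow> real^'d \<Rightarrow> complex^'d"
  assumes "CARD('d) = 2 * CARD('n)"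
    and "almost_kahler U g J \<kappa>"
    and "p0 \<in> U"
    and "gen_normal_hol_frame U g J p0 Z"
  shows "\<forall>i j r s. RJ g J (cfield (Z i)) (Z j) (Z r) (cfield (Z s)) p0 =
           - \<i> * gC g p0 (nabla g (cfield (Z i)) (\<lambda>y. jmul J y (nabla g (Z j) (Z r) y)) p0) (cvec (Z s p0))"
proof (intro allI)
  fix i j r s
  note Z_diff = gen_normal_hol_frame_partially_differentiable[OF assms(4)]
  note christoffel = almost_kahler_christoffel[OF assms(2,3)]
  have nabla_Z_conj: "\<And>i k. nabla g (Z k) (cfield (Z i)) p0 = 0"
    and nabla_Z_nabla_conj_Z: "\<And>r k i. nabla g (Z r) (nabla g (cfield (Z k)) (Z i)) p0 = 0"
    and J_Z: "\<And>k. jmul J p0 (Z k p0) = (\<chi> c. \<i> * Z k p0 $ c)"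
    using assms(4) unfolding gen_normal_hol_frame_def by blast+
  have J_diff: "\<And>c b. partially_differentiable (\<lambda>y. J y $ c $ b) p0"
    using assms(2,3) smooth_on_partially_differentiable[where as = "[]"]
    unfolding almost_kahler_def smooth_matrix_on_def by fastforce
  have nabla_conj_Z: "\<And>k. nabla g (cfield (Z i)) (Z k) p0 = 0"
    using nabla_cfield[OF Z_diff(1)] nabla_Z_conj by (simp add: cvec_def vec_eq_iff)
  have first: "nabla g (Z j) (\<lambda>y. jmul J y (nabla g (cfield (Z i)) (Z r) y)) p0 = 0"
    using nabla_jmul_at_zero[OF nabla_conj_Z partially_differentiable_nabla J_diff]
      nabla_Z_nabla_conj_Z
    by (simp add: cfield_def cvec_def Z_diff christoffel jmul_def vec_eq_iff
        partially_differentiable_cnj)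
  have "lie (cfield (Z i)) (Z j) p0 = 0"
    using lie_eq_nabla_diff[OF christoffel(2)] nabla_conj_Z nabla_Z_conj by simp
  then have bracket: "nabla g (lie (cfield (Z i)) (Z j)) (\<lambda>y. jmul J y (Z r y)) p0 = 0"
    by (rule nabla_eq_0_if_direction_0)
  have J_conj_Z: "jmul J p0 (cfield (Z s) p0) = (\<chi> c. - \<i> * cvec (Z s p0) $ c)"
    using J_Z unfolding cfield_def jmul_cvec by (simp add: cvec_def vec_eq_iff)
  show "RJ g J (cfield (Z i)) (Z j) (Z r) (cfield (Z s)) p0 =
      - \<i> * gC g p0 (nabla g (cfield (Z i)) (\<lambda>y. jmul J y (nabla g (Z j) (Z r) y)) p0) (cvec (Z s p0))"
    unfolding RJ_def first bracket J_conj_Z gC_scale_right by simp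
qed

end
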